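(* Let $n$ be an odd prime and $g<n$ a positive integer which is a generator of $U(\mathbb Z/n\mathbb Z)$. Let $C=circ(c_1,\dots,c_n)$ be a real circulant matrix with eigenvalues $\lambda_k=\sum_{\ell=1}^{n}c_\ell\,\omega^{(k-1)(\ell-1)}$, $1\le k\le n$, where $\omega=\cos\frac{2\pi}{n}+i\sin\frac{2\pi}{n}$, and let $A=Q_gC$ (a real $g$-circulant matrix). Then the eigenvalues of $A$ are $$\lambda_1,\ \beta^{\frac{1}{n-1}},\ \beta^{\frac{1}{n-1}}\varphi,\ \beta^{\frac{1}{n-1}}\varphi^2,\ \dots,\ \beta^{\frac{1}{n-1}}\varphi^{n-2},$$ where $\varphi=\cos\frac{2\pi}{n-1}+i\sin\frac{2\pi}{n-1}$ and $\beta=\left(|\lambda_2||\lambda_3|\cdots|\lambda_{\frac{n+1}{2}}|\right)^2$.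
   Context: $circ(c_1,\dots,c_n)$ is the circulant matrix whose $(i,j)$ entry is $c_{j-i+1}$ (subscripts mod $n$ in $\{1,\dots,n\}$). $Q_g$ is the $n\times n$ permutation matrix whose $(i,j)$ entry is $1$ if $j\equiv 1+(i-1)g\pmod n$ and $0$ otherwise. A $g$-circulant matrix is one in which each row is the preceding row cyclically shifted $g$ places to the right; $Q_gC$ is the $g$-circulant matrix with the same first row as $C$. *)

theory Defs
  imports "HOL-Number_Theory.Residue_Primitive_Roots" "Jordan_Normal_Form.Char_Poly"
begin

text \<open>Matrices are n x n Jordan_Normal_Form matrices with 0-based indices; the paper's
  row/column i (1-based) is our row/column i-1. The first row c_1..c_n is given by
  c :: nat => real evaluated at 1..n (1-based, as in the paper).\<close>

definition circ :: "nat \<Rightarrow> (nat \<Rightarrow> real) \<Rightarrow> real mat" where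
  "circ n c = mat n n (\<lambda>(i, j). c ((j + n - i) mod n + 1))"

text \<open>Q_g: paper entry (i,j) is 1 iff j = 1 + (i-1) g (mod n); 0-based: j = i g (mod n).\<close>
definition Qmat :: "nat \<Rightarrow> nat \<Rightarrow> real mat" where
  "Qmat n g = mat n n (\<lambda>(i, j). if j = (i * g) mod n then 1 else 0)"

definition omega :: "nat \<Rightarrow> complex" where
  "omega n = cis (2 * pi / real n)"

definition circ_eig :: "nat \<Rightarrow> (nat \<Rightarrow> real) \<Rightarrow> nat \<Rightarrow> complex" where
  "circ_eig n c k = (\<Sum>l = 1..n. complex_of_real (c l) * omega n ^ ((k - 1) * (l - 1)))"

end

theory Submission
  imports Defs
begin

(* The Fourier vectors v_k = (omega^(i k))_i satisfy A v_k = lambda_(k+1) v_(g k mod n), because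
   Q_g only permutes the rows of the circulant C. As g is a primitive root modulo the prime n, the
   nonzero frequencies form the single cycle 1, g, g^2, ..., g^(n-2) under multiplication by g, so
   in the basis v_0, v_1, v_g, ..., v_(g^(n-2)) the matrix A becomes lambda_1 plus a weighted cyclic
   shift with weights lambda_(g^j+1). The characteristic polynomial of that shift is
   x^(n-1) - lambda_2 ... lambda_n, and since c is real, lambda_(n+2-k) is the conjugate of lambda_k;
   for odd n the product is therefore beta. Finally x^(n-1) - beta splits as the product of the
   x - beta^(1/(n-1)) phi^j. *)

section \<open>Roots of unity\<close>

lemma omega_power: "omega n ^ k = cis (2 * pi * real k / real n)"
  unfolding omega_def DeMoivre by (simp add: field_simps)

lemma cnj_omega_power:
  assumes "a \<le> n" shows "cnj (omega n ^ a) = omega n ^ (n - a)"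
proof (cases "n = 0")
  case False
  have "omega n ^ (n - a) = cis (2 * pi) * cis (- (2 * pi * real a / real n))"
    using assms False by (simp add: omega_power cis_mult of_nat_diff field_simps)
  then show ?thesis by (simp add: omega_power cis_cnj)
qed (use assms in simp)

lemma omega_power_mod: "omega n ^ (k mod n) = omega n ^ k"
proof (cases "n = 0")
  case False
  have "omega n ^ k = omega n ^ (n * (k div n) + k mod n)" by simp
  also have "\<dots> = (omega n ^ n) ^ (k div n) * omega n ^ (k mod n)"
    by (simp only: power_add power_mult)
  finally show ?thesis using False by (simp add: omega_power)
qed simp

lemma omega_power_eq_1_iff:
  assumes "0 < n" shows "omega n ^ k = 1 \<longleftrightarrow> n dvd k"
proof
  assume "omega n ^ k = 1"
  then have "cis (2 * pi * real (k mod n) / real n) = cis (2 * pi * real 0 / real n)"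
    by (simp add: omega_power_mod omega_power[symmetric])
  then have "k mod n = 0"
    using inj_onD[OF bij_betw_imp_inj_on[OF bij_betw_roots_unity[OF assms]]] assms by simp
  then show "n dvd k" by auto
qed (metis omega_power_mod mod_0 power_0 dvd_eq_mod_eq_0)

lemma omega_power_cong: "[k = l] (mod n) \<Longrightarrow> omega n ^ k = omega n ^ l"
  unfolding cong_def by (metis omega_power_mod)

lemma sum_omega_orthogonal:
  assumes "a < n" "b < n"
  shows "(\<Sum>i<n. cnj (omega n ^ (i * a)) * omega n ^ (i * b)) = (if a = b then of_nat n else 0)"
proof -
  define z where "z = omega n ^ (n - a + b)"
  have summand: "cnj (omega n ^ (i * a)) * omega n ^ (i * b) = z ^ i" for i
  proof -
    have "cnj (omega n ^ (i * a)) = cnj (omega n ^ a) ^ i"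
      by (simp only: mult.commute[of i] power_mult complex_cnj_power)
    also have "\<dots> = omega n ^ ((n - a) * i)"
      using assms by (simp only: cnj_omega_power power_mult)
    finally have "cnj (omega n ^ (i * a)) = omega n ^ ((n - a) * i)" .
    then show ?thesis
      by (simp only: z_def power_add power_mult_distrib mult.commute[of i] power_mult[symmetric])
  qed
  have "z ^ n = 1"
    using assms by (simp add: z_def omega_power_eq_1_iff flip: power_mult)
  moreover have "z = 1 \<longleftrightarrow> a = b"
  proof -
    have "n dvd n - a + b \<longleftrightarrow> a = b"
    proof (cases "a \<le> b")
      case True
      then have "n - a + b = (b - a) + 1 * n" using assms by simp
      then have "(n - a + b) mod n = b - a"
        using assms by (simp only: mod_mult_self1) simp
      then show ?thesis using True by (auto simp: dvd_eq_mod_eq_0)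
    next
      case False
      then show ?thesis using assms by (auto dest: dvd_imp_le)
    qed
    then show ?thesis using assms by (simp add: z_def omega_power_eq_1_iff)
  qed
  ultimately show ?thesis unfolding summand by (auto simp: geometric_sum)
qed

lemma monom_minus_power_eq_prod_omega:
  fixes r :: complex
  assumes "0 < m"
  shows "monom 1 m - [:r ^ m:] = (\<Prod>j<m. [:- (r * omega m ^ j), 1:])"
proof (cases "r = 0")
  case True
  then show ?thesis using assms by (simp add: x_as_monom monom_power)
next
  case False
  let ?P = "\<Prod>j<m. [:- (r * omega m ^ j), 1:]"
  have deg_P: "degree ?P = m"
    by (subst degree_prod_eq_sum_degree) auto
  have "lead_coeff ?P = 1" by (simp add: lead_coeff_prod)
  then have coeff_P: "coeff ?P m = 1" using deg_P by simp
  have "inj_on (\<lambda>j. r * omega m ^ j) {..<m}"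
    using inj_onD[OF bij_betw_imp_inj_on[OF bij_betw_roots_unity[OF assms]]] False
    by (intro inj_onI) (simp add: omega_power)
  then have card_roots: "card ((\<lambda>j. r * omega m ^ j) ` {..<m}) = m"
    by (simp add: card_image)
  have "(r * omega m ^ j) ^ m = r ^ m" for j
    using assms by (simp add: power_mult_distrib omega_power_eq_1_iff flip: power_mult)
  then show ?thesis
    using assms deg_P coeff_P card_roots
    by (intro poly_eqI_degree_lead_coeff[where n = m and A = "(\<lambda>j. r * omega m ^ j) ` {..<m}"])
      (auto simp: degree_monom_eq degree_diff_le coeff_const poly_monom poly_prod)
qed

section \<open>Weighted cyclic shifts\<close>

definition weighted_shift_mat :: "nat \<Rightarrow> (nat \<Rightarrow> 'a) \<Rightarrow> 'a :: zero mat" where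
  "weighted_shift_mat m w = mat m m (\<lambda>(i, j). if i = Suc j mod m then w j else 0)"

lemma weighted_shift_mat_carrier [simp]: "weighted_shift_mat m w \<in> carrier_mat m m"
  by (simp add: weighted_shift_mat_def)

lemma index_char_poly_matrix_weighted_shift:
  fixes w :: "nat \<Rightarrow> 'a :: comm_ring_1"
  assumes "i < m" "j < m"
  shows "char_poly_matrix (weighted_shift_mat m w) $$ (i, j) =
    (if i = j then [:0, 1:] else 0) - (if i = Suc j mod m then [:w j:] else 0)"
  using assms by (auto simp: char_poly_matrix_def weighted_shift_mat_def)

lemma prod_list_diag_mat: "prod_list (diag_mat A) = (\<Prod>i<dim_row A. A $$ (i, i))"
  by (simp add: prod.list_conv_set_nth diag_mat_def atLeast0LessThan)

lemma cofactor_char_poly_matrix_weighted_shift_0_0: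
  fixes w :: "nat \<Rightarrow> 'a :: comm_ring_1"
  assumes "2 \<le> m"
  shows "cofactor (char_poly_matrix (weighted_shift_mat m w)) 0 0 = [:0, 1:] ^ (m - 1)"
proof -
  let ?M = "char_poly_matrix (weighted_shift_mat m w)"
  define D where "D = mat_delete ?M 0 0"
  have D: "D \<in> carrier_mat (m - 1) (m - 1)"
    unfolding D_def by (rule mat_delete_carrier) simp
  have D_entry: "D $$ (i, j) = ?M $$ (Suc i, Suc j)" if "i < m - 1" "j < m - 1" for i j
    using that carrier_matD[OF char_poly_matrix_closed[OF weighted_shift_mat_carrier[of m w]]]
    by (simp add: D_def mat_delete_def)
  have "det D = prod_list (diag_mat D)"
  proof (rule det_lower_triangular[OF _ D])
    fix i j assume "i < j" "j < m - 1"
    then show "D $$ (i, j) = 0"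
      by (cases "Suc (Suc j) = m") (simp_all add: D_entry index_char_poly_matrix_weighted_shift)
  qed
  also have "\<dots> = (\<Prod>i<m - 1. D $$ (i, i))"
    using D by (simp add: prod_list_diag_mat)
  also have "\<dots> = (\<Prod>i<m - 1. [:0, 1:])"
  proof (rule prod.cong)
    fix i assume "i \<in> {..<m - 1}"
    then show "D $$ (i, i) = [:0, 1:]"
      by (cases "Suc (Suc i) = m") (simp_all add: D_entry index_char_poly_matrix_weighted_shift)
  qed simp
  finally show ?thesis by (simp add: cofactor_def D_def)
qed

lemma cofactor_char_poly_matrix_weighted_shift_0_last:
  fixes w :: "nat \<Rightarrow> 'a :: comm_ring_1"
  assumes "2 \<le> m"
  shows "cofactor (char_poly_matrix (weighted_shift_mat m w)) 0 (m - 1) = (\<Prod>j<m - 1. [:w j:])"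
proof -
  let ?M = "char_poly_matrix (weighted_shift_mat m w)"
  define D where "D = mat_delete ?M 0 (m - 1)"
  have D: "D \<in> carrier_mat (m - 1) (m - 1)"
    unfolding D_def by (rule mat_delete_carrier) simp
  have D_entry: "D $$ (i, j) = ?M $$ (Suc i, j)" if "i < m - 1" "j < m - 1" for i j
    using that carrier_matD[OF char_poly_matrix_closed[OF weighted_shift_mat_carrier[of m w]]]
    by (simp add: D_def mat_delete_def)
  have "upper_triangular D"
    using D by (auto simp: upper_triangular_def D_entry index_char_poly_matrix_weighted_shift)
  then have "det D = prod_list (diag_mat D)" using D by (rule det_upper_triangular)
  also have "\<dots> = (\<Prod>j<m - 1. - [:w j:])"
    using D by (simp add: prod_list_diag_mat D_entry index_char_poly_matrix_weighted_shift)
  also have "\<dots> = (- 1) ^ (m - 1) * (\<Prod>j<m - 1. [:w j:])"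
    using prod_uminus[of "\<lambda>j. [:w j:]" "{..<m - 1}"] by simp
  finally show ?thesis
    \<comment> \<open>the sign of the cofactor cancels the sign of the diagonal\<close>
    by (simp add: cofactor_def D_def flip: mult.assoc power_mult_distrib)
qed

lemma char_poly_weighted_shift_mat:
  fixes w :: "nat \<Rightarrow> 'a :: comm_ring_1"
  assumes "0 < m"
  shows "char_poly (weighted_shift_mat m w) = monom 1 m - [:\<Prod>j<m. w j:]"
proof (cases "m = 1")
  case True
  have "weighted_shift_mat m w = mat 1 1 (\<lambda>_. w 0)"
    using True by (auto simp: weighted_shift_mat_def)
  then show ?thesis
    using True by (simp add: char_poly_defs det_single monom_Suc)
next
  case False
  let ?M = "char_poly_matrix (weighted_shift_mat m w)"
  have m: "2 \<le> m" using assms False by simp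
  have "det ?M = (\<Sum>j<m. ?M $$ (0, j) * cofactor ?M 0 j)"
    using assms by (intro laplace_expansion_row) auto
  also have "\<dots> = (\<Sum>j\<in>{0, m - 1}. ?M $$ (0, j) * cofactor ?M 0 j)"
    using m by (intro sum.mono_neutral_right)
      (auto simp: index_char_poly_matrix_weighted_shift dest!: dvd_imp_le)
  also have "\<dots> = [:0, 1:] * [:0, 1:] ^ (m - 1) - [:w (m - 1):] * (\<Prod>j<m - 1. [:w j:])"
    using m cofactor_char_poly_matrix_weighted_shift_0_0[where w = w, OF m]
      cofactor_char_poly_matrix_weighted_shift_0_last[where w = w, OF m]
    by (simp add: index_char_poly_matrix_weighted_shift)
  also have "\<dots> = monom 1 m - [:\<Prod>j<m. w j:]"
  proof -
    obtain k where k: "m = Suc k" using assms by (cases m) auto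
    show ?thesis
      unfolding k prod_to_poly[symmetric]
      by (simp add: x_as_monom monom_power mult_monom mult.commute)
  qed
  finally show ?thesis by (simp add: char_poly_def)
qed

section \<open>\<open>g\<close>-circulants act on Fourier vectors\<close>

lemma sum_lessThan_rotate_mod: "(\<Sum>j<n. f ((j + r) mod n)) = (\<Sum>j<(n :: nat). f j)"
proof (cases "n = 0")
  case False
  have "j + r + (n - 1) * r = j + n * r" "j + (n - 1) * r + r = j + n * r" for j
    using False by (cases n; simp)+
  then have cancel: "((j + r) mod n + (n - 1) * r) mod n = j"
      "((j + (n - 1) * r) mod n + r) mod n = j" if "j < n" for j
    using that by (simp_all only: mod_add_left_eq) simp_all
  show ?thesis
    by (rule sum.reindex_bij_witness[where j = "\<lambda>j. (j + r) mod n"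
          and i = "\<lambda>j. (j + (n - 1) * r) mod n"])
      (use False cancel in auto)
qed simp

lemma omega_power_shift_mod:
  assumes "r < n"
  shows "omega n ^ ((j + (n - r)) mod n * k) * omega n ^ (r * k) = omega n ^ (j * k)"
proof -
  have "[(j + (n - r)) mod n * k + r * k = (j + (n - r)) * k + r * k] (mod n)"
    by (intro cong_add cong_mult) (simp_all add: cong_def)
  also have "(j + (n - r)) * k + r * k = j * k + n * k"
    using assms by (simp flip: add_mult_distrib)
  also have "[j * k + n * k = j * k] (mod n)"
    by (simp add: cong_def)
  finally show ?thesis
    unfolding power_add[symmetric] by (rule omega_power_cong)
qed

definition fourier_vec :: "nat \<Rightarrow> nat \<Rightarrow> complex vec" where
  "fourier_vec n k = vec n (\<lambda>i. omega n ^ (i * k))"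

lemma circ_eig_Suc:
  "circ_eig n c (Suc k) = (\<Sum>m<n. complex_of_real (c (Suc m)) * omega n ^ (m * k))"
  by (simp add: circ_eig_def sum.atLeast1_atMost_eq mult.commute)

lemma g_circulant_carrier: "Qmat n g * circ n c \<in> carrier_mat n n"
  unfolding Qmat_def circ_def by (rule mult_carrier_mat[OF mat_carrier mat_carrier])

lemma g_circulant_entry:
  assumes "i < n" "j < n"
  shows "(Qmat n g * circ n c) $$ (i, j) = c ((j + n - i * g mod n) mod n + 1)"
proof -
  have "(Qmat n g * circ n c) $$ (i, j) = (\<Sum>r<n. Qmat n g $$ (i, r) * circ n c $$ (r, j))"
    using assms by (simp add: Qmat_def circ_def scalar_prod_def atLeast0LessThan)
  also have "\<dots> = (\<Sum>r<n. if r = i * g mod n then circ n c $$ (r, j) else 0)"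
    by (rule sum.cong) (use assms in \<open>auto simp: Qmat_def\<close>)
  also have "\<dots> = circ n c $$ (i * g mod n, j)"
    using assms by simp
  finally show ?thesis using assms by (simp add: circ_def)
qed

lemma g_circulant_mult_fourier_vec:
  "map_mat complex_of_real (Qmat n g * circ n c) *\<^sub>v fourier_vec n k =
     circ_eig n c (Suc k) \<cdot>\<^sub>v fourier_vec n (g * k mod n)"
proof -
  define A where "A = Qmat n g * circ n c"
  have A: "dim_row A = n" "dim_col A = n"
    unfolding A_def by (simp_all add: Qmat_def circ_def)
  have A_entry: "A $$ (i, j) = c ((j + n - i * g mod n) mod n + 1)" if "i < n" "j < n" for i j
    unfolding A_def using that by (rule g_circulant_entry)
  have "(map_mat complex_of_real A *\<^sub>v fourier_vec n k) $ i =
      (circ_eig n c (Suc k) \<cdot>\<^sub>v fourier_vec n (g * k mod n)) $ i" if i: "i < n" for i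
  proof -
    define r where "r = i * g mod n"
    define F where "F m = complex_of_real (c (Suc m)) * omega n ^ (m * k)" for m
    have r: "r < n" using i by (simp add: r_def)
    have summand: "complex_of_real (c (Suc ((j + n - r) mod n))) * omega n ^ (j * k) =
        F ((j + (n - r)) mod n) * omega n ^ (r * k)" for j
      using r omega_power_shift_mod[OF r, of j k] by (simp add: F_def mult.assoc)
    have "(map_mat complex_of_real A *\<^sub>v fourier_vec n k) $ i =
        (\<Sum>j<n. complex_of_real (c (Suc ((j + n - r) mod n))) * omega n ^ (j * k))"
      using i A by (auto simp: fourier_vec_def scalar_prod_def atLeast0LessThan A_entry r_def
          intro!: sum.cong)
    also have "\<dots> = (\<Sum>j<n. F ((j + (n - r)) mod n)) * omega n ^ (r * k)"
      by (simp add: summand sum_distrib_right)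
    also have "\<dots> = circ_eig n c (Suc k) * omega n ^ (r * k)"
      unfolding sum_lessThan_rotate_mod by (simp add: circ_eig_Suc F_def)
    also have "omega n ^ (r * k) = omega n ^ (i * (g * k mod n))"
      by (rule omega_power_cong)
        (simp add: r_def cong_def mod_mult_left_eq mod_mult_right_eq mult.assoc)
    finally show ?thesis using i by (simp add: fourier_vec_def)
  qed
  then show ?thesis
    unfolding A_def[symmetric] by (intro eq_vecI) (simp_all add: A fourier_vec_def)
qed

section \<open>Conjugate symmetry of the eigenvalues\<close>

lemma cnj_circ_eig:
  assumes "k \<le> n"
  shows "cnj (circ_eig n c (Suc k)) = circ_eig n c (Suc (n - k))"
proof -
  have "cnj (omega n ^ (m * k)) = omega n ^ (m * (n - k))" for m
    using assms by (simp add: mult.commute[of m] power_mult flip: cnj_omega_power complex_cnj_power)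
  then show ?thesis by (simp add: circ_eig_Suc)
qed

lemma prod_circ_eig_eq_norm_square:
  assumes "odd n"
  shows "(\<Prod>k\<in>{0<..<n}. circ_eig n c (Suc k)) =
    complex_of_real ((\<Prod>k = 2..(n + 1) div 2. cmod (circ_eig n c k)) ^ 2)"
proof -
  define h where "h = n div 2"
  let ?L = "\<lambda>k. circ_eig n c (Suc k)"
  have n: "n = 2 * h + 1" using assms by (simp add: h_def)
  have "{0<..<n} = {1..h} \<union> {h<..<n}" using n by auto
  then have "(\<Prod>k\<in>{0<..<n}. ?L k) = (\<Prod>k\<in>{1..h} \<union> {h<..<n}. ?L k)" by simp
  also have "\<dots> = (\<Prod>k\<in>{1..h}. ?L k) * (\<Prod>k\<in>{h<..<n}. ?L k)"
    by (rule prod.union_disjoint) auto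
  also have "(\<Prod>k\<in>{h<..<n}. ?L k) = (\<Prod>k\<in>{1..h}. ?L (n - k))"
    by (rule prod.reindex_bij_witness[where i = "\<lambda>k. n - k" and j = "\<lambda>k. n - k"])
      (use n in auto)
  also have "\<dots> = (\<Prod>k\<in>{1..h}. cnj (?L k))"
    using n by (intro prod.cong refl) (simp add: cnj_circ_eig)
  also have "(\<Prod>k\<in>{1..h}. ?L k) * \<dots> = (\<Prod>k\<in>{1..h}. complex_of_real (cmod (?L k) ^ 2))"
    by (simp only: complex_norm_square prod.distrib)
  also have "\<dots> = complex_of_real ((\<Prod>k\<in>{1..h}. cmod (?L k)) ^ 2)"
    by (simp add: prod_power_distrib)
  also have "(\<Prod>k\<in>{1..h}. cmod (?L k)) = (\<Prod>k = 2..(n + 1) div 2. cmod (circ_eig n c k))"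
  proof -
    have "{2..(n + 1) div 2} = {Suc 1..Suc h}" using n by simp
    then show ?thesis by (simp only: prod.shift_bounds_cl_Suc_ivl)
  qed
  finally show ?thesis .
qed

section \<open>The normal form for a primitive root \<open>g\<close>\<close>

lemma similar_mat_if_mult_eq:
  fixes A :: "'a :: field mat"
  assumes A: "A \<in> carrier_mat n n" and B: "B \<in> carrier_mat n n"
    and P: "P \<in> carrier_mat n n" and Q: "Q \<in> carrier_mat n n"
    and QP: "Q * P = 1\<^sub>m n" and AP: "A * P = P * B"
  shows "similar_mat A B"
proof (rule similar_matI)
  show PQ: "P * Q = 1\<^sub>m n" by (rule mat_mult_left_right_inverse[OF Q P QP])
  have "A = A * (P * Q)" using A by (simp add: PQ)
  also have "\<dots> = P * B * Q" by (simp add: assoc_mult_mat[symmetric, OF A P Q] AP)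
  finally show "A = P * B * Q" .
qed (use A B P Q QP in auto)

definition primroot_freq :: "nat \<Rightarrow> nat \<Rightarrow> nat \<Rightarrow> nat" where
  "primroot_freq n g t = (if t = 0 then 0 else g ^ (t - 1) mod n)"

lemma primroot_freq_0 [simp]: "primroot_freq n g 0 = 0"
  by (simp add: primroot_freq_def)

definition fourier_basis_mat :: "nat \<Rightarrow> nat \<Rightarrow> complex mat" where
  "fourier_basis_mat n g = mat n n (\<lambda>(i, t). omega n ^ (i * primroot_freq n g t))"

definition fourier_basis_inv :: "nat \<Rightarrow> nat \<Rightarrow> complex mat" where
  "fourier_basis_inv n g = mat n n (\<lambda>(t, i). cnj (omega n ^ (i * primroot_freq n g t)) / of_nat n)"

definition g_circulant_normal_form :: "nat \<Rightarrow> nat \<Rightarrow> (nat \<Rightarrow> real) \<Rightarrow> complex mat" where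
  "g_circulant_normal_form n g c =
     four_block_mat (mat 1 1 (\<lambda>_. circ_eig n c 1)) (0\<^sub>m 1 (n - 1)) (0\<^sub>m (n - 1) 1)
       (weighted_shift_mat (n - 1) (\<lambda>j. circ_eig n c (Suc (g ^ j mod n))))"

context
  fixes n g :: nat
  assumes prime: "prime n" and primroot: "residue_primroot n g"
begin

lemma one_less_n: "1 < n"
  using prime by (rule prime_gt_1_nat)

lemma primroot_powers_bij: "bij_betw (\<lambda>i. g ^ i mod n) {..<n - 1} {0<..<n}"
  using residue_primroot_is_generator[OF one_less_n primroot]
  by (simp add: totient_prime[OF prime] totatives_prime[OF prime])

lemma primroot_freq_lt: "t < n \<Longrightarrow> primroot_freq n g t < n"
  using one_less_n by (simp add: primroot_freq_def)

lemma primroot_freq_eq_0_iff: "t < n \<Longrightarrow> primroot_freq n g t = 0 \<longleftrightarrow> t = 0"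
  using bij_betw_apply[OF primroot_powers_bij, of "t - 1"] by (auto simp: primroot_freq_def)

lemma inj_on_primroot_freq: "inj_on (primroot_freq n g) {..<n}"
proof (rule inj_onI)
  fix s t assume "s \<in> {..<n}" "t \<in> {..<n}" and eq: "primroot_freq n g s = primroot_freq n g t"
  then have s: "s < n" and t: "t < n" by simp_all
  show "s = t"
  proof (cases "s = 0 \<or> t = 0")
    case True
    have "primroot_freq n g s = 0 \<longleftrightarrow> primroot_freq n g t = 0" using eq by simp
    then have "s = 0 \<longleftrightarrow> t = 0"
      using primroot_freq_eq_0_iff[OF s] primroot_freq_eq_0_iff[OF t] by argo
    then show ?thesis using True by auto
  next
    case False
    then have "g ^ (s - 1) mod n = g ^ (t - 1) mod n"
      using eq by (simp add: primroot_freq_def)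
    then have "s - 1 = t - 1"
      by (rule inj_onD[OF bij_betw_imp_inj_on[OF primroot_powers_bij]]) (use s t False in auto)
    then show ?thesis using False by arith
  qed
qed

lemma primroot_freq_next:
  assumes "0 < t" "t < n"
  shows "primroot_freq n g (Suc (t mod (n - 1))) = g * primroot_freq n g t mod n"
proof -
  have coprime: "coprime n g" and "ord n g = n - 1"
    using primroot prime by (simp_all add: residue_primroot_def totient_prime)
  then have "[t mod (n - 1) = t] (mod ord n g)"
    by (simp add: cong_def)
  then have "[g ^ (t mod (n - 1)) = g ^ t] (mod n)"
    by (simp only: order_divides_expdiff[OF coprime])
  moreover have "g ^ t = g * g ^ (t - 1)"
    using assms by (simp flip: power_Suc)
  ultimately show ?thesis
    using assms by (simp add: primroot_freq_def cong_def mod_mult_right_eq)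
qed

lemma fourier_basis_inv_mult: "fourier_basis_inv n g * fourier_basis_mat n g = 1\<^sub>m n"
proof (rule eq_matI)
  fix s t assume "s < dim_row (1\<^sub>m n :: complex mat)" "t < dim_col (1\<^sub>m n :: complex mat)"
  then have s: "s < n" and t: "t < n" by auto
  have "(fourier_basis_inv n g * fourier_basis_mat n g) $$ (s, t) =
      (\<Sum>i<n. cnj (omega n ^ (i * primroot_freq n g s)) * omega n ^ (i * primroot_freq n g t)) / of_nat n"
    using s t by (simp add: fourier_basis_inv_def fourier_basis_mat_def scalar_prod_def
        atLeast0LessThan sum_divide_distrib)
  also have "\<dots> = (if primroot_freq n g s = primroot_freq n g t then 1 else 0)"
    using sum_omega_orthogonal[OF primroot_freq_lt[OF s] primroot_freq_lt[OF t]] one_less_n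
    by simp
  also have "\<dots> = 1\<^sub>m n $$ (s, t)"
    using inj_onD[OF inj_on_primroot_freq, of s t] s t by auto
  finally show "(fourier_basis_inv n g * fourier_basis_mat n g) $$ (s, t) = 1\<^sub>m n $$ (s, t)" .
qed (simp_all add: fourier_basis_inv_def fourier_basis_mat_def)

lemma fourier_basis_mat_carrier: "fourier_basis_mat n g \<in> carrier_mat n n"
  by (simp add: fourier_basis_mat_def)

lemma fourier_basis_inv_carrier: "fourier_basis_inv n g \<in> carrier_mat n n"
  by (simp add: fourier_basis_inv_def)

lemma g_circulant_normal_form_carrier: "g_circulant_normal_form n g c \<in> carrier_mat n n"
proof -
  have "1 + (n - 1) = n" using one_less_n by simp
  then show ?thesis
    unfolding g_circulant_normal_form_def
    by (metis four_block_carrier_mat mat_carrier zero_carrier_mat weighted_shift_mat_carrier)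
qed

lemma g_circulant_normal_form_entry:
  assumes "s < n" "t < n"
  shows "g_circulant_normal_form n g c $$ (s, t) =
    (if t = 0 then (if s = 0 then circ_eig n c 1 else 0)
     else if s = Suc (t mod (n - 1)) then circ_eig n c (Suc (primroot_freq n g t)) else 0)"
  using assms one_less_n
  by (cases s; cases t)
    (auto simp: g_circulant_normal_form_def weighted_shift_mat_def primroot_freq_def)

lemma fourier_basis_mat_intertwines:
  "map_mat complex_of_real (Qmat n g * circ n c) * fourier_basis_mat n g =
     fourier_basis_mat n g * g_circulant_normal_form n g c"
    (is "?A * ?P = ?P * ?B")
proof (rule eq_matI)
  have A: "dim_row ?A = n" "dim_col ?A = n" by (simp_all add: Qmat_def circ_def)
  note P = carrier_matD[OF fourier_basis_mat_carrier]
  note B = carrier_matD[OF g_circulant_normal_form_carrier[of c]]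
  fix i t assume "i < dim_row (?P * ?B)" "t < dim_col (?P * ?B)"
  then have i: "i < n" and t: "t < n" using P B by auto
  let ?f = "primroot_freq n g"
  have "(?A * ?P) $$ (i, t) = (?A *\<^sub>v col ?P t) $ i"
    using A P i t by simp
  also have "col ?P t = fourier_vec n (?f t)"
    using t by (simp add: fourier_basis_mat_def fourier_vec_def)
  also have "(?A *\<^sub>v fourier_vec n (?f t)) $ i =
      circ_eig n c (Suc (?f t)) * omega n ^ (i * (g * ?f t mod n))"
    unfolding g_circulant_mult_fourier_vec using i by (simp add: fourier_vec_def)
  also have "\<dots> = (?P * ?B) $$ (i, t)"
  proof -
    define s0 where "s0 = (if t = 0 then 0 else Suc (t mod (n - 1)))"
    define w where "w = circ_eig n c (Suc (?f t))"
    have "t mod (n - 1) < n - 1" using one_less_n by simp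
    then have s0: "s0 < n" by (auto simp: s0_def)
    have "(?P * ?B) $$ (i, t) = (\<Sum>s<n. ?P $$ (i, s) * ?B $$ (s, t))"
      using P B i t by (simp add: scalar_prod_def atLeast0LessThan)
    also have "\<dots> = (\<Sum>s<n. if s = s0 then ?P $$ (i, s) * w else 0)"
      using t by (intro sum.cong) (auto simp: g_circulant_normal_form_entry s0_def w_def)
    also have "\<dots> = omega n ^ (i * ?f s0) * w"
      using i s0 by (simp add: fourier_basis_mat_def)
    also have "?f s0 = g * ?f t mod n"
      using t primroot_freq_next[of t] by (cases "t = 0") (simp_all add: s0_def)
    finally show ?thesis by (simp add: w_def)
  qed
  finally show "(?A * ?P) $$ (i, t) = (?P * ?B) $$ (i, t)" .
qed (simp_all add: carrier_matD[OF fourier_basis_mat_carrier]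
      carrier_matD[OF g_circulant_normal_form_carrier] Qmat_def)

lemma char_poly_g_circulant:
  "char_poly (map_mat complex_of_real (Qmat n g * circ n c)) = char_poly (g_circulant_normal_form n g c)"
proof (rule char_poly_similar, rule similar_mat_if_mult_eq)
  show "map_mat complex_of_real (Qmat n g * circ n c) \<in> carrier_mat n n"
    using g_circulant_carrier by simp
qed (rule g_circulant_normal_form_carrier fourier_basis_mat_carrier fourier_basis_inv_carrier
      fourier_basis_inv_mult fourier_basis_mat_intertwines)+

lemma char_poly_g_circulant_normal_form:
  "char_poly (g_circulant_normal_form n g c) =
     [:- circ_eig n c 1, 1:] * (monom 1 (n - 1) - [:\<Prod>j<n - 1. circ_eig n c (Suc (g ^ j mod n)):])"
proof -
  have "char_poly (g_circulant_normal_form n g c) = char_poly (mat 1 1 (\<lambda>_. circ_eig n c 1)) *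
      char_poly (weighted_shift_mat (n - 1) (\<lambda>j. circ_eig n c (Suc (g ^ j mod n))))"
    unfolding g_circulant_normal_form_def by (rule char_poly_four_block_zeros_col) auto
  moreover have "char_poly (mat 1 1 (\<lambda>_. circ_eig n c 1)) = [:- circ_eig n c 1, 1:]"
    by (simp add: char_poly_defs det_single)
  ultimately show ?thesis
    using one_less_n by (simp add: char_poly_weighted_shift_mat)
qed

lemma prod_circ_eig_primroot_powers:
  "(\<Prod>j<n - 1. circ_eig n c (Suc (g ^ j mod n))) = (\<Prod>k\<in>{0<..<n}. circ_eig n c (Suc k))"
  by (rule prod.reindex_bij_betw[OF primroot_powers_bij])

end

theorem mainTheorem6:
  fixes n g :: nat and c :: "nat \<Rightarrow> real"
  assumes "prime n" and "odd n"
    and "0 < g" and "g < n" and "residue_primroot n g"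
  defines "A \<equiv> Qmat n g * circ n c"
    and "\<beta> \<equiv> (\<Prod>k = 2..(n + 1) div 2. cmod (circ_eig n c k)) ^ 2"
    and "\<phi> \<equiv> cis (2 * pi / real (n - 1))"
  shows "char_poly (map_mat complex_of_real A) =
           [:- circ_eig n c 1, 1:] *
           (\<Prod>j < n - 1. [:- (complex_of_real (root (n - 1) \<beta>) * \<phi> ^ j), 1:])"
proof -
  note prime = \<open>prime n\<close> and primroot = \<open>residue_primroot n g\<close>
  have "0 < n - 1" using prime_gt_1_nat[OF prime] by simp
  have "\<beta> \<ge> 0" by (simp add: \<beta>_def)
  have "char_poly (map_mat complex_of_real A) =
      [:- circ_eig n c 1, 1:] * (monom 1 (n - 1) - [:\<Prod>j<n - 1. circ_eig n c (Suc (g ^ j mod n)):])"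
    unfolding A_def
    using char_poly_g_circulant[OF prime primroot]
      char_poly_g_circulant_normal_form[OF prime primroot]
    by simp
  also have "(\<Prod>j<n - 1. circ_eig n c (Suc (g ^ j mod n))) = complex_of_real \<beta>"
    using prod_circ_eig_primroot_powers[OF prime primroot]
      prod_circ_eig_eq_norm_square[OF \<open>odd n\<close>]
    by (simp add: \<beta>_def)
  also have "\<dots> = complex_of_real (root (n - 1) \<beta>) ^ (n - 1)"
    using \<open>0 < n - 1\<close> \<open>\<beta> \<ge> 0\<close> by (simp flip: of_real_power)
  also have "monom 1 (n - 1) - [:complex_of_real (root (n - 1) \<beta>) ^ (n - 1):] =
      (\<Prod>j<n - 1. [:- (complex_of_real (root (n - 1) \<beta>) * \<phi> ^ j), 1:])"
    unfolding \<phi>_def omega_def[symmetric]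
    by (rule monom_minus_power_eq_prod_omega[OF \<open>0 < n - 1\<close>])
  finally show ?thesis .
qed

end
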